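(* Let $\mathcal{A}=\langle L,\mathcal{X},E\rangle$ be a timed automaton with $n$ clocks and $\ell_0,\ell\in L$. Then $$\{\nu\in\mathbb{R}_{\ge0}^{\mathcal{X}}: \text{there is a run of }\mathcal{A}\text{ from }\langle\ell_0,\mathbf{0}\rangle\text{ to }\langle\ell,\nu\rangle\}=\bigcup_{Z\in\mathcal{Z}_1(\mathcal{X})}\ \bigcup_{\gamma\subseteq\mathcal{X}}\{\upsilon+\mu:\mu\in Z,\ \upsilon\in\mathbb{N}^{\mathcal{X}},\ \langle\ell_0,\mathbf{0},\{\mathbf{0}\},\gamma\rangle\to^*\langle\ell,\upsilon,Z,\emptyset\rangle\text{ in }R(\mathcal{A})\},$$ where $\to^*$ denotes existence of a run of $R(\mathcal{A})$ (on any word).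
   Context: Let $\mathcal{X}$ be a finite set of clocks. Clock constraints $\Phi(\mathcal{X})$ are generated by $\varphi ::= \mathbf{true}\mid x<k\mid x=k\mid x>k\mid \varphi\wedge\varphi$ with $k\in\mathbb{N}$, $x\in\mathcal{X}$. A clock valuation is a map $\nu:\mathcal{X}\to\mathbb{R}_{\ge0}$; $\nu\models\varphi$ denotes satisfaction; $\mathbf{0}$ is the all-zero valuation; $(\nu+t)(x)=\nu(x)+t$ for $t\ge0$; for $\lambda\subseteq\mathcal{X}$, $\nu[\lambda\leftarrow0]$ sets clocks in $\lambda$ to $0$ and leaves others unchanged. A timed automaton is $\mathcal{A}=\langle L,\mathcal{X},E\rangle$ with finite location set $L$, finite clock set $\mathcal{X}$, and edges $E\subseteq L\times\Phi(\mathcal{X})\times2^{\mathcal{X}}\times L$. A configuration is a pair $\langle\ell,\nu\rangle$. Transitions: delay $\langle\ell,\nu\rangle\xrightarrow{d}\langle\ell,\nu+d\rangle$ for $d\ge0$; discrete $\langle\ell,\nu\rangle\xrightarrow{0}\langle\ell',\nu[\lambda\leftarrow0]\rangle$ whenever $\langle\ell,\varphi,\lambda,\ell'\rangle\in E$ and $\nu\models\varphi$. A run is a finite (possibly empty) sequence of consecutive transitions. A 1-bounded zone is a subset of $[0,1]^{\mathcal{X}}$ defined by a finite conjunction of constraints $x_i\bowtie c$ and $x_i-x_j\bowtie c$ with $c\in\{-1,0,1\}$ and $\bowtie\in\{<,\le,=,\ge,>\}$; $\mathcal{Z}_1(\mathcal{X})$ is the (finite) set of 1-bounded zones. For a set $Z$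 of valuations, $Z[\lambda\leftarrow0]=\{\nu[\lambda\leftarrow0]:\nu\in Z\}$ and $\overrightarrow{Z}=\{\nu+t:\nu\in Z,t\ge0\}\cap[0,1]^{\mathcal{X}}$; $[\![x=1]\!]$ is the set of valuations with $x=1$; for $\upsilon\in\mathbb{N}^{\mathcal{X}}$, $\upsilon[x\leftarrow x+1]$ increments coordinate $x$ by one. The automaton $R(\mathcal{A})$ is the (infinite-state, nondeterministic, with $\varepsilon$-transitions) automaton over alphabet $\mathcal{X}$ with states $Q=L\times\mathbb{N}^{\mathcal{X}}\times\mathcal{Z}_1(\mathcal{X})\times2^{\mathcal{X}}$ and transitions: (1) delay: $\langle\ell,\upsilon,Z,\gamma\rangle\xrightarrow{\varepsilon}\langle\ell,\upsilon,\overrightarrow{Z},\gamma\rangle$; (2) wrapping, for each $x\in\mathcal{X}$: $\langle\ell,\upsilon,Z,\gamma\rangle\xrightarrow{\sigma}\langle\ell,\upsilon[x\leftarrow x+1],(Z\cap[\![x=1]\!])[x\leftarrow0],\gamma\rangle$, where $\sigma=\varepsilon$ if $x\in\gamma$ and $\sigma=x$ otherwise; (3) for each edge $\langle\ell,\varphi,\lambda,\ell'\rangle\in E$ and each $\gamma'$ with $\gamma'\cup\lambda=\gamma$: $\langle\ell,\upsilon,Z,\gamma\rangle\xrightarrow{\varepsilon}\langle\ell',\upsilon[\lambda\leftarrow0],\{\nu\in Z:\upsilon+\nu\models\varphi\}[\lambda\leftarrow0],\gamma'\rangle$. *)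

theory Defs
  imports Complex_Main
begin

text \<open>Clocks are the elements of a finite type 'c (so the clock set X is UNIV :: 'c set).
  Valuations are maps 'c => real.\<close>

datatype 'c clock_constraint =
    CTrue
  | CLt 'c nat
  | CEq 'c nat
  | CGt 'c nat
  | CAnd "'c clock_constraint" "'c clock_constraint"

fun cc_sat :: "('c \<Rightarrow> real) \<Rightarrow> 'c clock_constraint \<Rightarrow> bool" where
  "cc_sat \<nu> CTrue = True"
| "cc_sat \<nu> (CLt x k) = (\<nu> x < real k)"
| "cc_sat \<nu> (CEq x k) = (\<nu> x = real k)"
| "cc_sat \<nu> (CGt x k) = (\<nu> x > real k)"
| "cc_sat \<nu> (CAnd \<phi> \<psi>) = (cc_sat \<nu> \<phi> \<and> cc_sat \<nu> \<psi>)"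

record ('l, 'c) ta =
  locs :: "'l set"
  edges :: "('l \<times> 'c clock_constraint \<times> 'c set \<times> 'l) set"

definition ta_wf :: "('l, 'c) ta \<Rightarrow> bool" where
  "ta_wf A \<longleftrightarrow> finite (locs A) \<and> finite (edges A) \<and>
     (\<forall>(l, g, r, l') \<in> edges A. l \<in> locs A \<and> l' \<in> locs A)"

definition reset :: "('c \<Rightarrow> 'a::zero) \<Rightarrow> 'c set \<Rightarrow> 'c \<Rightarrow> 'a" where
  "reset \<nu> r = (\<lambda>x. if x \<in> r then 0 else \<nu> x)"

definition delay :: "('c \<Rightarrow> real) \<Rightarrow> real \<Rightarrow> 'c \<Rightarrow> real" where
  "delay \<nu> t = (\<lambda>x. \<nu> x + t)"

inductive ta_step :: "('l, 'c) ta \<Rightarrow> 'l \<times> ('c \<Rightarrow> real) \<Rightarrow> 'l \<times> ('c \<Rightarrow> real) \<Rightarrow> bool"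
  for A where
  ta_delay: "d \<ge> 0 \<Longrightarrow> ta_step A (l, \<nu>) (l, delay \<nu> d)"
| ta_disc: "(l, \<phi>, r, l') \<in> edges A \<Longrightarrow> cc_sat \<nu> \<phi> \<Longrightarrow> ta_step A (l, \<nu>) (l', reset \<nu> r)"

definition ta_run :: "('l, 'c) ta \<Rightarrow> 'l \<times> ('c \<Rightarrow> real) \<Rightarrow> 'l \<times> ('c \<Rightarrow> real) \<Rightarrow> bool" where
  "ta_run A = (ta_step A)\<^sup>*\<^sup>*"

datatype cmp = CmpLt | CmpLe | CmpEq | CmpGe | CmpGt

fun cmp_sem :: "cmp \<Rightarrow> real \<Rightarrow> real \<Rightarrow> bool" where
  "cmp_sem CmpLt a b = (a < b)"
| "cmp_sem CmpLe a b = (a \<le> b)"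
| "cmp_sem CmpEq a b = (a = b)"
| "cmp_sem CmpGe a b = (a \<ge> b)"
| "cmp_sem CmpGt a b = (a > b)"

datatype 'c zone_atom = ZSingle 'c cmp int | ZDiff 'c 'c cmp int

fun zatom_sat :: "('c \<Rightarrow> real) \<Rightarrow> 'c zone_atom \<Rightarrow> bool" where
  "zatom_sat \<nu> (ZSingle x b c) = cmp_sem b (\<nu> x) (of_int c)"
| "zatom_sat \<nu> (ZDiff x y b c) = cmp_sem b (\<nu> x - \<nu> y) (of_int c)"

fun zatom_const :: "'c zone_atom \<Rightarrow> int" where
  "zatom_const (ZSingle x b c) = c"
| "zatom_const (ZDiff x y b c) = c"

definition unit_box :: "('c \<Rightarrow> real) set" where
  "unit_box = {\<nu>. \<forall>x. 0 \<le> \<nu> x \<and> \<nu> x \<le> 1}"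

definition zone_of :: "'c zone_atom set \<Rightarrow> ('c \<Rightarrow> real) set" where
  "zone_of C = {\<nu> \<in> unit_box. \<forall>a \<in> C. zatom_sat \<nu> a}"

definition zones1 :: "('c \<Rightarrow> real) set set" where
  "zones1 = {zone_of C | C. finite C \<and> (\<forall>a \<in> C. zatom_const a \<in> {-1, 0, 1})}"

definition zreset :: "('c \<Rightarrow> real) set \<Rightarrow> 'c set \<Rightarrow> ('c \<Rightarrow> real) set" where
  "zreset Z r = (\<lambda>\<nu>. reset \<nu> r) ` Z"

definition zfuture :: "('c \<Rightarrow> real) set \<Rightarrow> ('c \<Rightarrow> real) set" where
  "zfuture Z = {delay \<nu> t | \<nu> t. \<nu> \<in> Z \<and> t \<ge> 0} \<inter> unit_box"

definition add_int :: "('c \<Rightarrow> nat) \<Rightarrow> ('c \<Rightarrow> real) \<Rightarrow> 'c \<Rightarrow> real" where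
  "add_int \<upsilon> \<nu> = (\<lambda>x. real (\<upsilon> x) + \<nu> x)"

text \<open>The automaton R(A); states (l, upsilon, Z, gamma). Transition labels are omitted
  since only reachability on an arbitrary word is needed.\<close>
inductive R_step :: "('l, 'c) ta \<Rightarrow> 'l \<times> ('c \<Rightarrow> nat) \<times> ('c \<Rightarrow> real) set \<times> 'c set
      \<Rightarrow> 'l \<times> ('c \<Rightarrow> nat) \<times> ('c \<Rightarrow> real) set \<times> 'c set \<Rightarrow> bool"
  for A where
  R_delay: "R_step A (l, \<upsilon>, Z, \<gamma>) (l, \<upsilon>, zfuture Z, \<gamma>)"
| R_wrap: "R_step A (l, \<upsilon>, Z, \<gamma>)
     (l, \<upsilon>(x := \<upsilon> x + 1), zreset (Z \<inter> {\<nu>. \<nu> x = 1}) {x}, \<gamma>)"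
| R_edge: "(l, \<phi>, r, l') \<in> edges A \<Longrightarrow> \<gamma>' \<union> r = \<gamma> \<Longrightarrow>
     R_step A (l, \<upsilon>, Z, \<gamma>)
       (l', reset \<upsilon> r, zreset {\<nu> \<in> Z. cc_sat (add_int \<upsilon> \<nu>) \<phi>} r, \<gamma>')"

definition R_reach where
  "R_reach A = (R_step A)\<^sup>*\<^sup>*"

end

theory Submission
  imports Defs
begin

text \<open>Every valuation splits into an integer part \<open>\<upsilon>\<close> and a part \<open>\<mu>\<close> in the unit box, and \<open>R(A)\<close>
  tracks \<open>\<upsilon>\<close> exactly and the possible \<open>\<mu>\<close> by a zone. Each step of \<open>R(A)\<close> is matched by a run of
  \<open>A\<close> on \<open>\<upsilon> + \<mu>\<close>. Conversely a delay of \<open>A\<close> is cut at the moments where a clock reaches 1, which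
  is then wrapped, and a discrete step is taken by an edge of \<open>R(A)\<close>; the resets it performs are
  guessed in advance in the set \<open>\<gamma>\<close>, which is why \<open>\<gamma>\<close> is arbitrary initially and empty at the end.
  The zones reached are closed: cut out of the unit box by the 1-bounded difference constraints
  they satisfy. Closedness survives guards, resets and time elapse by Fourier--Motzkin elimination
  of one variable, and closed sets are 1-bounded zones.\<close>

section \<open>Strict and non-strict bounds\<close>

fun below :: "bool \<Rightarrow> real \<Rightarrow> real \<Rightarrow> bool" where
  "below True a b = (a < b)"
| "below False a b = (a \<le> b)"

lemma below_add: "below s1 a c1 \<Longrightarrow> below s2 b c2 \<Longrightarrow> below (s1 \<or> s2) (a + b) (c1 + c2)"
  by (cases s1; cases s2) auto

lemma below_le: "below s a b \<Longrightarrow> a \<le> b"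
  by (cases s) auto

lemma below_mono: "below s a c \<Longrightarrow> b \<le> a \<Longrightarrow> below s b c"
  by (cases s) auto

lemma below_disjD: "below (s \<or> s') a b \<Longrightarrow> below s a b \<and> below s' a b"
  by (cases s; cases s') auto

lemma below_interpolate:
  fixes lo :: "'i \<Rightarrow> real" and slo :: "'i \<Rightarrow> bool" and hi :: "'j \<Rightarrow> real" and shi :: "'j \<Rightarrow> bool"
  assumes "finite I" "finite J" "I \<noteq> {}" "J \<noteq> {}"
    and compat: "\<And>i j. i \<in> I \<Longrightarrow> j \<in> J \<Longrightarrow> below (slo i \<or> shi j) (lo i) (hi j)"
  obtains t where "\<And>i. i \<in> I \<Longrightarrow> below (slo i) (lo i) t" "\<And>j. j \<in> J \<Longrightarrow> below (shi j) t (hi j)"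
proof -
  define a where "a = Max (lo ` I)"
  define b where "b = Min (hi ` J)"
  have "a \<in> lo ` I" "b \<in> hi ` J"
    using assms(1-4) unfolding a_def b_def by simp_all
  then obtain i0 j0 where i0: "i0 \<in> I" "lo i0 = a" and j0: "j0 \<in> J" "hi j0 = b"
    by blast
  have "a \<le> b" using below_le[OF compat[OF i0(1) j0(1)]] i0 j0 by simp
  show thesis
  proof (rule that)
    fix i assume "i \<in> I"
    then have "lo i \<le> a" "below (slo i) (lo i) b"
      using assms(1) below_disjD[OF compat[OF _ j0(1)]] j0(2) by (auto simp: a_def)
    then show "below (slo i) (lo i) ((a + b) / 2)"
      using \<open>a \<le> b\<close> by (cases "slo i") auto
  next
    fix j assume "j \<in> J"
    then have "b \<le> hi j" "below (shi j) a (hi j)"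
      using assms(2) below_disjD[OF compat[OF i0(1)]] i0(2) by (auto simp: b_def)
    then show "below (shi j) ((a + b) / 2) (hi j)"
      using \<open>a \<le> b\<close> by (cases "shi j") auto
  qed
qed

section \<open>Closed 1-bounded zones\<close>

text \<open>A difference constraint \<open>u - v \<triangleleft> c\<close> compares two clocks or a clock with the
  reference clock \<open>None\<close>, whose value is constantly 0; this covers the constraints \<open>x \<triangleleft> c\<close>,
  \<open>-y \<triangleleft> c\<close> and \<open>x - y \<triangleleft> c\<close> of 1-bounded zones uniformly.\<close>

fun cval :: "('c \<Rightarrow> real) \<Rightarrow> 'c option \<Rightarrow> real" where
  "cval \<nu> None = 0"
| "cval \<nu> (Some x) = \<nu> x"

definition holds_on :: "('c \<Rightarrow> real) set \<Rightarrow> 'c option \<Rightarrow> 'c option \<Rightarrow> bool \<Rightarrow> int \<Rightarrow> bool" where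
  "holds_on Z u v s c \<longleftrightarrow> (\<forall>\<mu>\<in>Z. below s (cval \<mu> u - cval \<mu> v) (of_int c))"

text \<open>Unlike \<open>zone_of\<close>, this notion does not depend on a chosen set of constraints, which makes
  its stability under the operations of \<open>R(A)\<close> easy to prove.\<close>

definition closed_zone1 :: "('c \<Rightarrow> real) set \<Rightarrow> bool" where
  "closed_zone1 Z \<longleftrightarrow> Z \<subseteq> unit_box \<and> (\<forall>\<nu>\<in>unit_box.
     (\<forall>u v s c. c \<in> {-1, 0, 1} \<longrightarrow> holds_on Z u v s c \<longrightarrow> below s (cval \<nu> u - cval \<nu> v) (of_int c))
     \<longrightarrow> \<nu> \<in> Z)"

lemma cval_unit_box: "\<nu> \<in> unit_box \<Longrightarrow> 0 \<le> cval \<nu> u \<and> cval \<nu> u \<le> 1"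
  by (cases u) (auto simp: unit_box_def)

lemma cval_upd: "u \<noteq> Some x \<Longrightarrow> cval (\<nu>(x := t)) u = cval \<nu> u"
  by (cases u) auto

lemma cval_reset: "u \<notin> Some ` r \<Longrightarrow> cval (reset \<nu> r) u = cval \<nu> u"
  by (cases u) (auto simp: reset_def)

lemma holds_on_trans:
  "holds_on Z u w s1 c1 \<Longrightarrow> holds_on Z w v s2 c2 \<Longrightarrow> holds_on Z u v (s1 \<or> s2) (c1 + c2)"
  unfolding holds_on_def using below_add by fastforce

lemma holds_on_refl_nonempty: "holds_on Z u u s c \<Longrightarrow> Z \<noteq> {} \<Longrightarrow> below s 0 (of_int c)"
  by (auto simp: holds_on_def)

lemma holds_on_unit_box:
  assumes "Z \<subseteq> unit_box"
  shows "holds_on Z None v False 0" "holds_on Z u None False 1"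
  using assms cval_unit_box by (fastforce simp: holds_on_def)+

lemma holds_on_zreset:
  "holds_on Z u v s c \<Longrightarrow> u \<notin> Some ` r \<Longrightarrow> v \<notin> Some ` r \<Longrightarrow> holds_on (zreset Z r) u v s c"
  by (auto simp: holds_on_def zreset_def cval_reset)

text \<open>Delaying preserves lower bounds and differences of clocks, but not upper bounds.\<close>

lemma holds_on_zfuture:
  assumes "holds_on Z u v s c" "u = None \<or> v \<noteq> None"
  shows "holds_on (zfuture Z) u v s c"
  unfolding holds_on_def
proof
  fix \<mu>' assume "\<mu>' \<in> zfuture Z"
  then obtain \<mu> t where "\<mu> \<in> Z" "0 \<le> t" "\<mu>' = delay \<mu> t" by (auto simp: zfuture_def)
  moreover have "cval (delay \<mu> t) u - cval (delay \<mu> t) v \<le> cval \<mu> u - cval \<mu> v"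
    using assms(2) \<open>0 \<le> t\<close> by (cases u; cases v) (auto simp: delay_def)
  ultimately show "below s (cval \<mu>' u - cval \<mu>' v) (of_int c)"
    using assms(1) below_mono by (auto simp: holds_on_def)
qed

text \<open>On the unit box all differences lie in \<open>[-1, 1]\<close>, so constraints with \<open>|c| \<ge> 2\<close> are
  vacuous or unsatisfiable on a nonempty set.\<close>

lemma below_of_holds_on:
  assumes "Z \<subseteq> unit_box" "Z \<noteq> {}" "\<nu> \<in> unit_box"
    and unit: "\<And>u v s c. c \<in> {-1, 0, 1} \<Longrightarrow> holds_on Z u v s c
                 \<Longrightarrow> below s (cval \<nu> u - cval \<nu> v) (of_int c)"
    and hold: "holds_on Z u v s c"
  shows "below s (cval \<nu> u - cval \<nu> v) (of_int c)"
proof -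
  consider "c \<in> {-1, 0, 1}" | "c \<ge> 2" | "c \<le> -2" by force
  then show ?thesis
  proof cases
    case 2
    then show ?thesis
      using cval_unit_box[OF \<open>\<nu> \<in> unit_box\<close>, of u] cval_unit_box[OF \<open>\<nu> \<in> unit_box\<close>, of v]
      by (cases s) auto
  next
    case 3
    obtain \<mu> where "\<mu> \<in> Z" using assms(2) by auto
    with assms(1) have "\<mu> \<in> unit_box" "below s (cval \<mu> u - cval \<mu> v) (of_int c)"
      using hold by (auto simp: holds_on_def)
    then show ?thesis
      using 3 cval_unit_box[of \<mu> u] cval_unit_box[of \<mu> v] below_le by fastforce
  qed (use unit hold in blast)
qed

lemma closed_zone1_subset: "closed_zone1 Z \<Longrightarrow> Z \<subseteq> unit_box"
  by (simp add: closed_zone1_def)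

lemma closed_zone1D:
  "closed_zone1 Z \<Longrightarrow> \<nu> \<in> unit_box \<Longrightarrow>
   (\<And>u v s c. c \<in> {-1, 0, 1} \<Longrightarrow> holds_on Z u v s c \<Longrightarrow> below s (cval \<nu> u - cval \<nu> v) (of_int c))
   \<Longrightarrow> \<nu> \<in> Z"
  unfolding closed_zone1_def by blast

lemma closed_zone1I:
  assumes "Z \<subseteq> unit_box"
    and "\<And>\<nu>. Z \<noteq> {} \<Longrightarrow> \<nu> \<in> unit_box \<Longrightarrow>
           (\<And>u v s c. holds_on Z u v s c \<Longrightarrow> below s (cval \<nu> u - cval \<nu> v) (of_int c)) \<Longrightarrow> \<nu> \<in> Z"
  shows "closed_zone1 Z"
  unfolding closed_zone1_def
proof (intro conjI assms(1) ballI impI)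
  fix \<nu> assume \<nu>: "\<nu> \<in> unit_box"
    and unit: "\<forall>u v s c. c \<in> {-1, 0, 1} \<longrightarrow> holds_on Z u v s c \<longrightarrow> below s (cval \<nu> u - cval \<nu> v) (of_int c)"
  show "\<nu> \<in> Z"
  proof (cases "Z = {}")
    case True
    then have "holds_on Z None None True 0" by (simp add: holds_on_def)
    then show ?thesis using unit by force
  next
    case False
    show ?thesis
      by (rule assms(2)[OF False \<nu>], rule below_of_holds_on[OF assms(1) False \<nu>]) (use unit in blast)+
  qed
qed

lemma zone_atom_of_constraint:
  assumes "c \<in> {-1, 0, 1}"
  obtains a :: "'c zone_atom" where "zatom_const a \<in> {-1, 0, 1}"
    "\<And>\<mu>. zatom_sat \<mu> a \<longleftrightarrow> below s (cval \<mu> u - cval \<mu> v) (of_int c)"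
proof -
  let ?b = "if s then CmpLt else CmpLe" and ?b' = "if s then CmpGt else CmpGe"
  consider "u = None" "v = None" | y where "u = None" "v = Some y"
    | x where "u = Some x" "v = None" | x y where "u = Some x" "v = Some y"
    by (cases u; cases v) auto
  then show thesis
  proof cases
    case 1
    \<comment> \<open>\<open>0 \<triangleleft> c\<close> is expressed as \<open>x - x \<triangleleft> c\<close> for an arbitrary clock \<open>x\<close>\<close>
    then show ?thesis using assms by (intro that[of "ZDiff undefined undefined ?b c"]; cases s) auto
  next
    case (2 y)
    then show ?thesis using assms by (intro that[of "ZSingle y ?b' (- c)"]; cases s) auto
  next
    case (3 x)
    then show ?thesis using assms by (intro that[of "ZSingle x ?b c"]; cases s) auto
  next
    case (4 x y)
    then show ?thesis using assms by (intro that[of "ZDiff x y ?b c"]; cases s) auto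
  qed
qed

lemma finite_UNIV_cmp: "finite (UNIV :: cmp set)"
proof -
  have "(UNIV :: cmp set) = {CmpLt, CmpLe, CmpEq, CmpGe, CmpGt}"
    using cmp.exhaust by auto
  then show ?thesis by (metis finite.emptyI finite_insert)
qed

lemma finite_unit_zone_atoms: "finite {a :: 'c::finite zone_atom. zatom_const a \<in> {-1, 0, 1}}"
proof (rule finite_subset)
  show "{a :: 'c zone_atom. zatom_const a \<in> {-1, 0, 1}} \<subseteq>
      (\<lambda>(x, b, c). ZSingle x b c) ` (UNIV \<times> UNIV \<times> {-1, 0, 1}) \<union>
      (\<lambda>(x, y, b, c). ZDiff x y b c) ` (UNIV \<times> UNIV \<times> UNIV \<times> {-1, 0, 1})"
  proof
    fix a :: "'c zone_atom"
    assume "a \<in> {a. zatom_const a \<in> {-1, 0, 1}}"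
    then show "a \<in> (\<lambda>(x, b, c). ZSingle x b c) ` (UNIV \<times> UNIV \<times> {-1, 0, 1}) \<union>
        (\<lambda>(x, y, b, c). ZDiff x y b c) ` (UNIV \<times> UNIV \<times> UNIV \<times> {-1, 0, 1})"
    proof (cases a)
      case (ZSingle x b c)
      with \<open>a \<in> _\<close> show ?thesis by (intro UnI1 image_eqI[of _ _ "(x, b, c)"]) auto
    next
      case (ZDiff x y b c)
      with \<open>a \<in> _\<close> show ?thesis by (intro UnI2 image_eqI[of _ _ "(x, y, b, c)"]) auto
    qed
  qed
qed (use finite_UNIV_cmp in auto)

lemma closed_zone1_in_zones1:
  fixes Z :: "('c::finite \<Rightarrow> real) set"
  assumes Z: "closed_zone1 Z"
  shows "Z \<in> zones1"
proof -
  define C where "C = {a :: 'c zone_atom. zatom_const a \<in> {-1, 0, 1} \<and> (\<forall>\<mu>\<in>Z. zatom_sat \<mu> a)}"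
  have "finite C"
    by (rule finite_subset[OF _ finite_unit_zone_atoms]) (auto simp: C_def)
  moreover have "zone_of C \<subseteq> Z"
  proof
    fix \<nu> assume \<nu>: "\<nu> \<in> zone_of C"
    show "\<nu> \<in> Z"
    proof (rule closed_zone1D[OF Z])
      show "\<nu> \<in> unit_box" using \<nu> by (simp add: zone_of_def)
      fix u v s c assume "c \<in> {-1, 0, 1}" "holds_on Z u v s c"
      obtain a where "zatom_const a \<in> {-1, 0, 1}"
        and a: "\<And>\<mu>. zatom_sat \<mu> a \<longleftrightarrow> below s (cval \<mu> u - cval \<mu> v) (of_int c)"
        using zone_atom_of_constraint[OF \<open>c \<in> {-1, 0, 1}\<close>] by metis
      with \<open>holds_on Z u v s c\<close> have "a \<in> C"
        by (simp add: C_def holds_on_def)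
      with \<nu> show "below s (cval \<nu> u - cval \<nu> v) (of_int c)"
        by (auto simp: zone_of_def simp flip: a)
    qed
  qed
  moreover have "Z \<subseteq> zone_of C"
    using closed_zone1_subset[OF Z] by (auto simp: zone_of_def C_def)
  ultimately show ?thesis unfolding zones1_def C_def by blast
qed

lemma closed_zone1_zero: "closed_zone1 {\<lambda>_. 0}"
proof (rule closed_zone1I)
  show "{\<lambda>_. 0} \<subseteq> unit_box" by (simp add: unit_box_def)
  fix \<nu> :: "'c \<Rightarrow> real"
  assume "\<nu> \<in> unit_box" and unit: "\<And>u v s c. holds_on {\<lambda>_. 0} u v s c
      \<Longrightarrow> below s (cval \<nu> u - cval \<nu> v) (of_int c)"
  have "\<nu> x \<le> 0" for x
    using unit[of "Some x" None False 0] by (simp add: holds_on_def)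
  with \<open>\<nu> \<in> unit_box\<close> have "\<nu> = (\<lambda>_. 0)"
    by (auto simp: unit_box_def intro: antisym)
  then show "\<nu> \<in> {\<lambda>_. 0}" by simp
qed

lemma closed_zone1_restrict:
  assumes Z: "closed_zone1 Z"
  shows "closed_zone1 {\<mu> \<in> Z. below s (cval \<mu> u - cval \<mu> v) (of_int c)}" (is "closed_zone1 ?Z")
proof (rule closed_zone1I)
  show "?Z \<subseteq> unit_box" using closed_zone1_subset[OF Z] by auto
  fix \<nu> assume "\<nu> \<in> unit_box"
    and sat: "\<And>u v s c. holds_on ?Z u v s c \<Longrightarrow> below s (cval \<nu> u - cval \<nu> v) (of_int c)"
  have "\<nu> \<in> Z"
    using closed_zone1D[OF Z \<open>\<nu> \<in> unit_box\<close>] sat by (auto simp: holds_on_def)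
  moreover have "below s (cval \<nu> u - cval \<nu> v) (of_int c)"
    using sat[of u v s c] by (simp add: holds_on_def)
  ultimately show "\<nu> \<in> ?Z" by simp
qed

lemma closed_zone1_guard:
  assumes "closed_zone1 Z"
  shows "closed_zone1 {\<mu> \<in> Z. cc_sat (add_int \<upsilon> \<mu>) \<phi>}"
  using assms
proof (induction \<phi> arbitrary: Z)
  case CTrue
  then show ?case by simp
next
  case (CLt x k)
  have "{\<mu> \<in> Z. cc_sat (add_int \<upsilon> \<mu>) (CLt x k)} =
      {\<mu> \<in> Z. below True (cval \<mu> (Some x) - cval \<mu> None) (of_int (int k - int (\<upsilon> x)))}"
    by (auto simp: add_int_def)
  with CLt show ?case by (simp only:) (rule closed_zone1_restrict)
next
  case (CGt x k)
  have "{\<mu> \<in> Z. cc_sat (add_int \<upsilon> \<mu>) (CGt x k)} =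
      {\<mu> \<in> Z. below True (cval \<mu> None - cval \<mu> (Some x)) (of_int (int (\<upsilon> x) - int k))}"
    by (auto simp: add_int_def)
  with CGt show ?case by (simp only:) (rule closed_zone1_restrict)
next
  case (CEq x k)
  have "{\<mu> \<in> Z. cc_sat (add_int \<upsilon> \<mu>) (CEq x k)} =
      {\<mu> \<in> {\<mu> \<in> Z. below False (cval \<mu> (Some x) - cval \<mu> None) (of_int (int k - int (\<upsilon> x)))}.
        below False (cval \<mu> None - cval \<mu> (Some x)) (of_int (int (\<upsilon> x) - int k))}"
    by (auto simp: add_int_def)
  with CEq show ?case by (simp only:) (intro closed_zone1_restrict)
next
  case (CAnd \<phi>1 \<phi>2)
  have eq: "{\<mu> \<in> Z. cc_sat (add_int \<upsilon> \<mu>) (CAnd \<phi>1 \<phi>2)} =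
      {\<mu> \<in> {\<mu> \<in> Z. cc_sat (add_int \<upsilon> \<mu>) \<phi>1}. cc_sat (add_int \<upsilon> \<mu>) \<phi>2}"
    by auto
  show ?case unfolding eq by (intro CAnd.IH CAnd.prems)
qed

lemma reset_unit_box: "\<nu> \<in> unit_box \<Longrightarrow> reset \<nu> r \<in> unit_box"
  by (auto simp: unit_box_def reset_def)

lemma finite_unit_constraints:
  "finite {(u :: 'a::finite, s :: bool, c :: int). c \<in> {-1, 0, 1} \<and> P u s c}"
  by (rule finite_subset[of _ "UNIV \<times> UNIV \<times> {-1, 0, 1}"]) auto

text \<open>Fourier--Motzkin elimination of the clock \<open>x\<close>: by the triangle inequality every lower bound
  on \<open>x\<close> valid on \<open>Z\<close> is compatible at \<open>\<nu>\<close> with every upper bound, so some value of \<open>x\<close> meets them all.\<close>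

lemma closed_zone1_unreset:
  fixes Z :: "('c::finite \<Rightarrow> real) set"
  assumes Z: "closed_zone1 Z" "Z \<noteq> {}" and \<nu>: "\<nu> \<in> unit_box"
    and sat: "\<And>u v s c. holds_on (zreset Z {x}) u v s c \<Longrightarrow> below s (cval \<nu> u - cval \<nu> v) (of_int c)"
  obtains t where "\<nu>(x := t) \<in> Z"
proof -
  define I where "I = {(u, s, c). c \<in> {-1, 0, 1} \<and> u \<noteq> Some x \<and> holds_on Z u (Some x) s c}"
  define J where "J = {(v, s, c). c \<in> {-1, 0, 1} \<and> v \<noteq> Some x \<and> holds_on Z (Some x) v s c}"
  have I0: "(None, False, 0) \<in> I" and J1: "(None, False, 1) \<in> J"
    using holds_on_unit_box[OF closed_zone1_subset[OF Z(1)]] by (auto simp: I_def J_def)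
  have compat: "below (fst (snd i) \<or> fst (snd j))
      (cval \<nu> (fst i) - of_int (snd (snd i))) (cval \<nu> (fst j) + of_int (snd (snd j)))"
    if "i \<in> I" "j \<in> J" for i j
  proof -
    obtain u s1 c1 v s2 c2 where ij: "i = (u, s1, c1)" "j = (v, s2, c2)"
      by (metis prod_cases3)
    have "holds_on Z u v (s1 \<or> s2) (c1 + c2)"
      using that holds_on_trans[of Z u "Some x"] by (simp add: I_def J_def ij)
    then have "holds_on (zreset Z {x}) u v (s1 \<or> s2) (c1 + c2)"
      using that by (intro holds_on_zreset) (auto simp: I_def J_def ij)
    from sat[OF this] show ?thesis by (cases "s1 \<or> s2") (auto simp: ij)
  qed
  have "finite I" "finite J" unfolding I_def J_def by (rule finite_unit_constraints)+
  then obtain t where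
    lo: "\<And>i. i \<in> I \<Longrightarrow> below (fst (snd i)) (cval \<nu> (fst i) - of_int (snd (snd i))) t" and
    hi: "\<And>j. j \<in> J \<Longrightarrow> below (fst (snd j)) t (cval \<nu> (fst j) + of_int (snd (snd j)))"
    by (rule below_interpolate[OF _ _ _ _ compat]) (use I0 J1 in auto)
  have "0 \<le> t" "t \<le> 1" using lo[OF I0] hi[OF J1] by simp_all
  have "\<nu>(x := t) \<in> Z"
  proof (rule closed_zone1D[OF Z(1)])
    show "\<nu>(x := t) \<in> unit_box" using \<nu> \<open>0 \<le> t\<close> \<open>t \<le> 1\<close> by (auto simp: unit_box_def)
    fix u v s c assume c: "c \<in> {-1, 0, 1}" and uv: "holds_on Z u v s c"
    consider "u = Some x" "v = Some x" | "u = Some x" "v \<noteq> Some x"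
      | "u \<noteq> Some x" "v = Some x" | "u \<noteq> Some x" "v \<noteq> Some x" by blast
    then show "below s (cval (\<nu>(x := t)) u - cval (\<nu>(x := t)) v) (of_int c)"
    proof cases
      case 1
      then show ?thesis using holds_on_refl_nonempty[OF _ Z(2)] uv by simp
    next
      case 2
      then show ?thesis using hi[of "(v, s, c)"] c uv by (cases s) (auto simp: J_def cval_upd)
    next
      case 3
      then show ?thesis using lo[of "(u, s, c)"] c uv by (cases s) (auto simp: I_def cval_upd)
    next
      case 4
      then show ?thesis using sat[OF holds_on_zreset[OF uv]] by (simp add: cval_upd)
    qed
  qed
  then show thesis by (rule that)
qed

lemma closed_zone1_reset1:
  assumes Z: "closed_zone1 (Z :: ('c::finite \<Rightarrow> real) set)"
  shows "closed_zone1 (zreset Z {x})"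
proof (rule closed_zone1I)
  show "zreset Z {x} \<subseteq> unit_box"
    using closed_zone1_subset[OF Z] by (auto simp: zreset_def reset_unit_box)
  fix \<nu> assume "zreset Z {x} \<noteq> {}" "\<nu> \<in> unit_box"
    and sat: "\<And>u v s c. holds_on (zreset Z {x}) u v s c \<Longrightarrow> below s (cval \<nu> u - cval \<nu> v) (of_int c)"
  then have "Z \<noteq> {}" by (auto simp: zreset_def)
  then obtain t where "\<nu>(x := t) \<in> Z"
    using closed_zone1_unreset[OF Z _ \<open>\<nu> \<in> unit_box\<close> sat] by blast
  moreover have "\<nu> x = 0"
    using sat[of "Some x" None False 0] \<open>\<nu> \<in> unit_box\<close>
    by (auto simp: holds_on_def zreset_def reset_def unit_box_def intro: antisym)
  then have "reset (\<nu>(x := t)) {x} = \<nu>" by (auto simp: reset_def)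
  ultimately show "\<nu> \<in> zreset Z {x}" unfolding zreset_def by (metis image_eqI)
qed

lemma zreset_insert:
  fixes Z :: "('c \<Rightarrow> real) set"
  shows "zreset Z (insert x r) = zreset (zreset Z r) {x}"
proof -
  have "reset (reset \<mu> r) {x} = reset \<mu> (insert x r)" for \<mu> :: "'c \<Rightarrow> real"
    by (auto simp: reset_def)
  then show ?thesis unfolding zreset_def image_image by simp
qed

lemma closed_zone1_reset:
  assumes "closed_zone1 (Z :: ('c::finite \<Rightarrow> real) set)"
  shows "closed_zone1 (zreset Z r)"
  using finite[of r]
proof (induction r rule: finite_induct)
  case empty
  have "zreset Z {} = Z" by (auto simp: zreset_def reset_def)
  then show ?case using assms by simp
next
  case (insert x r)
  show ?case by (subst zreset_insert) (rule closed_zone1_reset1[OF insert.IH])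
qed

text \<open>The same elimination for the time elapsed: lower bounds on the delay come from upper bounds
  on clocks (including \<open>0 \<le> t\<close>), upper bounds from lower bounds on clocks.\<close>

lemma closed_zone1_undelay:
  fixes Z :: "('c::finite \<Rightarrow> real) set"
  assumes Z: "closed_zone1 Z" "Z \<noteq> {}" and \<nu>: "\<nu> \<in> unit_box"
    and sat: "\<And>u v s c. holds_on (zfuture Z) u v s c \<Longrightarrow> below s (cval \<nu> u - cval \<nu> v) (of_int c)"
  obtains t where "0 \<le> t" "(\<lambda>y. \<nu> y - t) \<in> Z"
proof -
  define I where "I = {(u, s, c). c \<in> {-1, 0, 1} \<and> holds_on Z u None s c}"
  define J where "J = {(y, s, c). c \<in> {-1, 0, 1} \<and> holds_on Z None (Some y) s c}"
  have I0: "(None, False, 0) \<in> I" and J0: "(y, False, 0) \<in> J" for y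
    using holds_on_unit_box[OF closed_zone1_subset[OF Z(1)]] by (auto simp: I_def J_def)
  have compat: "below (fst (snd i) \<or> fst (snd j))
      (cval \<nu> (fst i) - of_int (snd (snd i))) (\<nu> (fst j) + of_int (snd (snd j)))"
    if "i \<in> I" "j \<in> J" for i j
  proof -
    obtain u s1 c1 y s2 c2 where ij: "i = (u, s1, c1)" "j = (y, s2, c2)"
      by (metis prod_cases3)
    have "holds_on Z u (Some y) (s1 \<or> s2) (c1 + c2)"
      using that holds_on_trans[of Z u None] by (simp add: I_def J_def ij)
    then have "holds_on (zfuture Z) u (Some y) (s1 \<or> s2) (c1 + c2)"
      by (rule holds_on_zfuture) simp
    from sat[OF this] show ?thesis by (cases "s1 \<or> s2") (auto simp: ij)
  qed
  have "finite I" "finite J" unfolding I_def J_def by (rule finite_unit_constraints)+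
  then obtain t where
    lo: "\<And>i. i \<in> I \<Longrightarrow> below (fst (snd i)) (cval \<nu> (fst i) - of_int (snd (snd i))) t" and
    hi: "\<And>j. j \<in> J \<Longrightarrow> below (fst (snd j)) t (\<nu> (fst j) + of_int (snd (snd j)))"
    by (rule below_interpolate[OF _ _ _ _ compat]) (use I0 J0 in auto)
  have "0 \<le> t" using lo[OF I0] by simp
  have "(\<lambda>y. \<nu> y - t) \<in> Z"
  proof (rule closed_zone1D[OF Z(1)])
    have "t \<le> \<nu> y" for y using hi[OF J0[of y]] by simp
    with \<nu> \<open>0 \<le> t\<close> show "(\<lambda>y. \<nu> y - t) \<in> unit_box"
      by (simp add: unit_box_def) (smt (verit))
    fix u v s c assume c: "c \<in> {-1, 0, 1}" and uv: "holds_on Z u v s c"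
    show "below s (cval (\<lambda>y. \<nu> y - t) u - cval (\<lambda>y. \<nu> y - t) v) (of_int c)"
    proof (cases u; cases v)
      assume "u = None" "v = None"
      then show ?thesis using holds_on_refl_nonempty[OF _ Z(2)] uv by simp
    next
      fix y assume "u = None" "v = Some y"
      then show ?thesis using hi[of "(y, s, c)"] c uv by (cases s) (auto simp: J_def)
    next
      fix x assume "u = Some x" "v = None"
      then show ?thesis using lo[of "(u, s, c)"] c uv by (cases s) (auto simp: I_def)
    next
      fix x y assume "u = Some x" "v = Some y"
      then show ?thesis using sat[OF holds_on_zfuture[OF uv]] by simp
    qed
  qed
  with \<open>0 \<le> t\<close> show thesis by (rule that)
qed

lemma closed_zone1_future:
  assumes Z: "closed_zone1 (Z :: ('c::finite \<Rightarrow> real) set)"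
  shows "closed_zone1 (zfuture Z)"
proof (rule closed_zone1I)
  show "zfuture Z \<subseteq> unit_box" by (auto simp: zfuture_def)
  fix \<nu> assume "zfuture Z \<noteq> {}" "\<nu> \<in> unit_box"
    and sat: "\<And>u v s c. holds_on (zfuture Z) u v s c \<Longrightarrow> below s (cval \<nu> u - cval \<nu> v) (of_int c)"
  then have "Z \<noteq> {}" by (auto simp: zfuture_def)
  then obtain t where "0 \<le> t" "(\<lambda>y. \<nu> y - t) \<in> Z"
    using closed_zone1_undelay[OF Z _ \<open>\<nu> \<in> unit_box\<close> sat] by blast
  moreover have "\<nu> = delay (\<lambda>y. \<nu> y - t) t" by (simp add: delay_def)
  ultimately show "\<nu> \<in> zfuture Z"
    using \<open>\<nu> \<in> unit_box\<close> unfolding zfuture_def by blast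
qed

lemma closed_zone1_wrap:
  assumes "closed_zone1 (Z :: ('c::finite \<Rightarrow> real) set)"
  shows "closed_zone1 (zreset (Z \<inter> {\<nu>. \<nu> x = 1}) {x})"
proof -
  have "Z \<inter> {\<nu>. \<nu> x = 1} = {\<mu> \<in> {\<mu> \<in> Z. below False (cval \<mu> (Some x) - cval \<mu> None) (of_int 1)}.
      below False (cval \<mu> None - cval \<mu> (Some x)) (of_int (-1))}"
    by auto
  then show ?thesis using assms by (simp only:) (intro closed_zone1_reset1 closed_zone1_restrict)
qed

section \<open>Simulation between \<open>A\<close> and \<open>R(A)\<close>\<close>

lemma add_int_delay: "add_int \<upsilon> (delay \<mu> d) = delay (add_int \<upsilon> \<mu>) d"
  by (simp add: add_int_def delay_def add.assoc)

lemma add_int_reset: "add_int (reset \<upsilon> r) (reset \<mu> r) = reset (add_int \<upsilon> \<mu>) r"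
  by (auto simp: add_int_def reset_def)

lemma add_int_wrap: "\<mu> x = 1 \<Longrightarrow> add_int (\<upsilon>(x := Suc (\<upsilon> x))) (reset \<mu> {x}) = add_int \<upsilon> \<mu>"
  by (auto simp: add_int_def reset_def)

lemmas rtranclp_induct4 =
  rtranclp_induct[of _ "(ax, ay, az, aw)" "(bx, by, bz, bw)", split_rule,
    consumes 1, case_names refl step]

lemma R_step_sound:
  assumes step: "R_step A (l, \<upsilon>, Z, \<gamma>) (l', \<upsilon>', Z', \<gamma>')" and "Z \<subseteq> unit_box"
  shows "Z' \<subseteq> unit_box \<and> (\<forall>\<mu>'\<in>Z'. \<exists>\<mu>\<in>Z. ta_run A (l, add_int \<upsilon> \<mu>) (l', add_int \<upsilon>' \<mu>'))"
  using step
proof cases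
  case R_delay
  have "ta_run A (l, add_int \<upsilon> \<mu>) (l, add_int \<upsilon> (delay \<mu> t))" if "0 \<le> t" for \<mu> t
    unfolding ta_run_def add_int_delay by (rule r_into_rtranclp, rule ta_delay[OF that])
  with R_delay show ?thesis by (auto simp: zfuture_def)
next
  case (R_wrap x)
  with \<open>Z \<subseteq> unit_box\<close> show ?thesis
    by (fastforce simp: zreset_def reset_unit_box add_int_wrap ta_run_def)
next
  case (R_edge \<phi> r)
  have "ta_run A (l, add_int \<upsilon> \<mu>) (l', add_int (reset \<upsilon> r) (reset \<mu> r))"
    if "cc_sat (add_int \<upsilon> \<mu>) \<phi>" for \<mu>
    using ta_disc[OF \<open>(l, \<phi>, r, l') \<in> edges A\<close> that] by (simp add: ta_run_def add_int_reset)
  with R_edge \<open>Z \<subseteq> unit_box\<close> show ?thesis by (auto simp: zreset_def reset_unit_box)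
qed

lemma R_reach_sound:
  assumes "R_reach A (l0, \<lambda>_. 0, {\<lambda>_. 0}, \<gamma>0) (l, \<upsilon>, Z, \<gamma>)"
  shows "Z \<subseteq> unit_box \<and> (\<forall>\<mu>\<in>Z. ta_run A (l0, \<lambda>_. 0) (l, add_int \<upsilon> \<mu>))"
  using assms unfolding R_reach_def
proof (induction rule: rtranclp_induct4)
  case refl
  then show ?case by (simp add: unit_box_def ta_run_def add_int_def)
next
  case (step l1 \<upsilon>1 Z1 \<gamma>1 l \<upsilon> Z \<gamma>)
  then show ?case using R_step_sound[OF step(2)] unfolding ta_run_def by (meson rtranclp_trans)
qed

lemma R_step_pending:
  assumes "R_step A (l, \<upsilon>, Z, \<gamma>) (l', \<upsilon>', Z', \<gamma>')"
  shows "R_step A (l, \<upsilon>, Z, \<gamma> \<union> S) (l', \<upsilon>', Z', \<gamma>' \<union> S)"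
  using assms
proof cases
  case R_delay
  then show ?thesis by (simp add: R_step.R_delay)
next
  case (R_wrap x)
  then show ?thesis using R_step.R_wrap[of A l \<upsilon> Z "\<gamma> \<union> S" x] by simp
next
  case (R_edge \<phi> r)
  then show ?thesis using R_step.R_edge[of l \<phi> r l' A "\<gamma>' \<union> S" "\<gamma> \<union> S"] by auto
qed

lemma R_reach_pending:
  "R_reach A (l, \<upsilon>, Z, \<gamma>) (l', \<upsilon>', Z', \<gamma>') \<Longrightarrow> R_reach A (l, \<upsilon>, Z, \<gamma> \<union> S) (l', \<upsilon>', Z', \<gamma>' \<union> S)"
  unfolding R_reach_def
  by (induction rule: rtranclp_induct4) (auto intro: rtranclp.rtrancl_into_rtrancl R_step_pending)

lemma floor_sum_wrap_less:
  fixes \<mu> :: "'c::finite \<Rightarrow> real"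
  assumes "\<mu> x + m = 1" "m < d"
  shows "(\<Sum>y\<in>UNIV. nat \<lfloor>reset (delay \<mu> m) {x} y + (d - m)\<rfloor>) < (\<Sum>y\<in>UNIV. nat \<lfloor>\<mu> y + d\<rfloor>)"
proof (rule sum_strict_mono_ex1)
  show "finite (UNIV :: 'c set)" by simp
  show "\<forall>y\<in>UNIV. nat \<lfloor>reset (delay \<mu> m) {x} y + (d - m)\<rfloor> \<le> nat \<lfloor>\<mu> y + d\<rfloor>"
    using assms by (auto simp: reset_def delay_def intro!: nat_mono floor_mono)
  have "\<mu> x + d = (d - m) + 1" using assms(1) by simp
  then have "\<lfloor>\<mu> x + d\<rfloor> = \<lfloor>d - m\<rfloor> + 1"
    by (metis floor_add_int of_int_1)
  then show "\<exists>y\<in>UNIV. nat \<lfloor>reset (delay \<mu> m) {x} y + (d - m)\<rfloor> < nat \<lfloor>\<mu> y + d\<rfloor>"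
    using assms(2) by (intro bexI[of _ x]) (auto simp: reset_def)
qed

text \<open>A delay is split at the moments a clock reaches 1, where that clock is wrapped; the number
  of integer points crossed by the clocks decreases with every wrap.\<close>

lemma R_reach_delay:
  fixes \<mu> :: "'c::finite \<Rightarrow> real"
  assumes "closed_zone1 Z" "\<mu> \<in> Z" "0 \<le> d"
  shows "\<exists>\<upsilon>' Z' \<mu>'. R_reach A (l, \<upsilon>, Z, \<gamma>) (l, \<upsilon>', Z', \<gamma>) \<and> closed_zone1 Z' \<and> \<mu>' \<in> Z' \<and>
           add_int \<upsilon>' \<mu>' = delay (add_int \<upsilon> \<mu>) d"
  using assms
proof (induction "\<Sum>y\<in>UNIV. nat \<lfloor>\<mu> y + d\<rfloor>" arbitrary: \<upsilon> Z \<mu> d rule: less_induct)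
  case less
  have "\<mu> \<in> unit_box" using less.prems closed_zone1_subset by blast
  have "Max (range \<mu>) \<in> range \<mu>" by (rule Max_in) auto
  then obtain x where x: "\<And>y. \<mu> y \<le> \<mu> x"
    using Max_ge[of "range \<mu>"] by fastforce
  have Zf: "closed_zone1 (zfuture Z)" using less.prems(1) by (rule closed_zone1_future)
  have R1: "R_step A (l, \<upsilon>, Z, \<gamma>) (l, \<upsilon>, zfuture Z, \<gamma>)" by (rule R_delay)
  have future: "delay \<mu> t \<in> zfuture Z" if "0 \<le> t" "\<mu> x + t \<le> 1" for t
    using \<open>\<mu> \<in> unit_box\<close> less.prems(2) that x unfolding zfuture_def
    by (auto simp: unit_box_def delay_def) (smt (verit) x)
  show ?case
  proof (cases "\<mu> x + d \<le> 1")
    case True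
    then show ?thesis using future[OF less.prems(3)] Zf R1 add_int_delay unfolding R_reach_def by blast
  next
    case False
    define m where "m = 1 - \<mu> x"
    define Z' where "Z' = zreset (zfuture Z \<inter> {\<nu>. \<nu> x = 1}) {x}"
    define \<mu>' where "\<mu>' = reset (delay \<mu> m) {x}"
    have "0 \<le> m" using \<open>\<mu> \<in> unit_box\<close> by (simp add: m_def unit_box_def)
    have "\<mu>' \<in> Z'"
      using future[OF \<open>0 \<le> m\<close>] by (auto simp: \<mu>'_def Z'_def zreset_def delay_def m_def)
    moreover have "closed_zone1 Z'" unfolding Z'_def using Zf by (rule closed_zone1_wrap)
    moreover have "0 \<le> d - m" using False by (simp add: m_def)
    moreover have "(\<Sum>y\<in>UNIV. nat \<lfloor>\<mu>' y + (d - m)\<rfloor>) < (\<Sum>y\<in>UNIV. nat \<lfloor>\<mu> y + d\<rfloor>)"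
      unfolding \<mu>'_def using False by (intro floor_sum_wrap_less) (simp_all add: m_def)
    ultimately obtain \<upsilon>'' Z'' \<mu>'' where
      R2: "R_reach A (l, \<upsilon>(x := \<upsilon> x + 1), Z', \<gamma>) (l, \<upsilon>'', Z'', \<gamma>)" and
      "closed_zone1 Z''" "\<mu>'' \<in> Z''"
      "add_int \<upsilon>'' \<mu>'' = delay (add_int (\<upsilon>(x := \<upsilon> x + 1)) \<mu>') (d - m)"
      using less.hyps by blast
    moreover have "delay \<mu> m x = 1" by (simp add: delay_def m_def)
    then have "add_int (\<upsilon>(x := Suc (\<upsilon> x))) \<mu>' = delay (add_int \<upsilon> \<mu>) m"
      unfolding \<mu>'_def add_int_wrap add_int_delay[symmetric] by (rule add_int_wrap)
    moreover have "R_reach A (l, \<upsilon>, Z, \<gamma>) (l, \<upsilon>(x := \<upsilon> x + 1), Z', \<gamma>)"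
      using R1 R_wrap[of A l \<upsilon> "zfuture Z" \<gamma> x] unfolding R_reach_def Z'_def by auto
    ultimately show ?thesis
      unfolding R_reach_def by (auto simp: delay_def intro: rtranclp_trans)
  qed
qed

lemma ta_run_complete:
  fixes A :: "('l, 'c::finite) ta"
  assumes "ta_run A (l0, \<lambda>_. 0) (l, \<nu>)"
  shows "\<exists>\<gamma> \<upsilon> Z \<mu>. R_reach A (l0, \<lambda>_. 0, {\<lambda>_. 0}, \<gamma>) (l, \<upsilon>, Z, {}) \<and> closed_zone1 Z \<and> \<mu> \<in> Z
           \<and> \<nu> = add_int \<upsilon> \<mu>"
  using assms unfolding ta_run_def
proof (induction rule: rtranclp_induct2)
  case refl
  show ?case
    by (intro exI[of _ "{}"] exI[of _ "\<lambda>_. 0"] exI[of _ "{\<lambda>_. 0}"] exI[of _ "\<lambda>_. 0"])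
      (simp add: R_reach_def closed_zone1_zero add_int_def)
next
  case (step l1 \<nu>1 l \<nu>)
  obtain \<gamma> \<upsilon> Z \<mu> where IH: "R_reach A (l0, \<lambda>_. 0, {\<lambda>_. 0}, \<gamma>) (l1, \<upsilon>, Z, {})"
    "closed_zone1 Z" "\<mu> \<in> Z" "\<nu>1 = add_int \<upsilon> \<mu>"
    using step.IH by blast
  from step.hyps(2) show ?case
  proof cases
    case (ta_delay d)
    obtain \<upsilon>' Z' \<mu>' where delay: "R_reach A (l1, \<upsilon>, Z, {}) (l1, \<upsilon>', Z', {})"
      "closed_zone1 Z'" "\<mu>' \<in> Z'" "add_int \<upsilon>' \<mu>' = delay (add_int \<upsilon> \<mu>) d"
      using R_reach_delay[OF IH(2,3) \<open>0 \<le> d\<close>, where A = A and l = l1 and \<upsilon> = \<upsilon> and \<gamma> = "{}"]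
      by blast
    have "R_reach A (l0, \<lambda>_. 0, {\<lambda>_. 0}, \<gamma>) (l, \<upsilon>', Z', {})"
      using rtranclp_trans[OF IH(1)[unfolded R_reach_def] delay(1)[unfolded R_reach_def]]
      unfolding R_reach_def \<open>l = l1\<close> .
    moreover have "\<nu> = add_int \<upsilon>' \<mu>'"
      unfolding \<open>\<nu> = delay \<nu>1 d\<close> IH(4) delay(4) ..
    ultimately show ?thesis using delay(2,3) by blast
  next
    case (ta_disc \<phi> r)
    let ?Z' = "zreset {\<mu> \<in> Z. cc_sat (add_int \<upsilon> \<mu>) \<phi>} r"
    have "R_reach A (l0, \<lambda>_. 0, {\<lambda>_. 0}, \<gamma> \<union> r) (l1, \<upsilon>, Z, r)"
      using R_reach_pending[OF IH(1), of r] by simp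
    moreover have "R_step A (l1, \<upsilon>, Z, r) (l, reset \<upsilon> r, ?Z', {})"
      using R_edge[OF \<open>(l1, \<phi>, r, l) \<in> edges A\<close>] by simp
    ultimately have "R_reach A (l0, \<lambda>_. 0, {\<lambda>_. 0}, \<gamma> \<union> r) (l, reset \<upsilon> r, ?Z', {})"
      unfolding R_reach_def by (rule rtranclp.rtrancl_into_rtrancl)
    moreover have "closed_zone1 ?Z'"
      using IH(2) by (intro closed_zone1_reset closed_zone1_guard)
    moreover have "reset \<mu> r \<in> ?Z'"
      using IH(3,4) ta_disc unfolding zreset_def by blast
    moreover have "\<nu> = add_int (reset \<upsilon> r) (reset \<mu> r)"
      using IH(4) ta_disc by (simp add: add_int_reset)
    ultimately show ?thesis by blast
  qed
qed

theorem mainTheorem7: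
  fixes A :: "('l, 'c::finite) ta" and l0 l :: 'l
  assumes "ta_wf A" and "l0 \<in> locs A" and "l \<in> locs A"
  shows "{\<nu>. (\<forall>x. \<nu> x \<ge> 0) \<and> ta_run A (l0, (\<lambda>_. 0)) (l, \<nu>)} =
    (\<Union>Z \<in> zones1. \<Union>\<gamma> \<in> (UNIV :: 'c set set).
       {add_int \<upsilon> \<mu> | \<mu> \<upsilon>. \<mu> \<in> Z \<and>
          R_reach A (l0, (\<lambda>_. 0), {(\<lambda>_. 0)}, \<gamma>) (l, \<upsilon>, Z, {})})"
proof (intro equalityI subsetI)
  fix \<nu> assume "\<nu> \<in> {\<nu>. (\<forall>x. \<nu> x \<ge> 0) \<and> ta_run A (l0, (\<lambda>_. 0)) (l, \<nu>)}"
  then have "ta_run A (l0, \<lambda>_. 0) (l, \<nu>)" by simp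
  from ta_run_complete[OF this] obtain \<gamma> \<upsilon> Z \<mu> where
    "R_reach A (l0, \<lambda>_. 0, {\<lambda>_. 0}, \<gamma>) (l, \<upsilon>, Z, {})" "closed_zone1 Z" "\<mu> \<in> Z" "\<nu> = add_int \<upsilon> \<mu>"
    by blast
  with closed_zone1_in_zones1 show "\<nu> \<in> (\<Union>Z \<in> zones1. \<Union>\<gamma> \<in> (UNIV :: 'c set set).
      {add_int \<upsilon> \<mu> | \<mu> \<upsilon>. \<mu> \<in> Z \<and> R_reach A (l0, (\<lambda>_. 0), {(\<lambda>_. 0)}, \<gamma>) (l, \<upsilon>, Z, {})})"
    by blast
next
  fix \<nu> assume "\<nu> \<in> (\<Union>Z \<in> zones1. \<Union>\<gamma> \<in> (UNIV :: 'c set set).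
      {add_int \<upsilon> \<mu> | \<mu> \<upsilon>. \<mu> \<in> Z \<and> R_reach A (l0, (\<lambda>_. 0), {(\<lambda>_. 0)}, \<gamma>) (l, \<upsilon>, Z, {})})"
  then obtain Z \<gamma> \<upsilon> \<mu> where "\<mu> \<in> Z" "\<nu> = add_int \<upsilon> \<mu>"
    and reach: "R_reach A (l0, \<lambda>_. 0, {\<lambda>_. 0}, \<gamma>) (l, \<upsilon>, Z, {})"
    by blast
  with R_reach_sound[OF reach] show "\<nu> \<in> {\<nu>. (\<forall>x. \<nu> x \<ge> 0) \<and> ta_run A (l0, (\<lambda>_. 0)) (l, \<nu>)}"
    by (auto simp: unit_box_def add_int_def)
qed

end
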